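(* Let $G$ be a well-bicovered graph with a clique $C$ and let $H$ be a well-bicovered graph (disjoint from $G$) with a clique $D$, where $|C|=|D|=k$. Let $F$ be the graph formed from the disjoint union of $G$ and $H$ by adding $k$ vertex-disjoint paths, each joining a vertex of $C$ to a vertex of $D$ (so that the paths pair up $C$ and $D$ bijectively), with interior vertices new, such that all the added paths have lengths of the same parity. Then $F$ is well-bicovered.
   Context: All graphs are finite and simple; "subgraph" means induced subgraph. A graph is well-bicovered if every vertex-inclusion-maximal induced bipartite subgraph has the same order. *)

theory Defs
  imports Main
begin

definition graph :: "'a set \<Rightarrow> ('a \<Rightarrow> 'a \<Rightarrow> bool) \<Rightarrow> bool" where
  "graph V E \<longleftrightarrow> finite V \<and> (\<forall>x y. E x y \<longrightarrow> x \<in> V \<and> y \<in> V)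
     \<and> (\<forall>x y. E x y \<longrightarrow> E y x) \<and> (\<forall>x. \<not> E x x)"

definition independent :: "('a \<Rightarrow> 'a \<Rightarrow> bool) \<Rightarrow> 'a set \<Rightarrow> bool" where
  "independent E A \<longleftrightarrow> (\<forall>x\<in>A. \<forall>y\<in>A. \<not> E x y)"

definition bipartite_set :: "('a \<Rightarrow> 'a \<Rightarrow> bool) \<Rightarrow> 'a set \<Rightarrow> bool" where
  "bipartite_set E S \<longleftrightarrow> (\<exists>A B. A \<union> B = S \<and> A \<inter> B = {} \<and> independent E A \<and> independent E B)"

definition maximal_bipartite :: "'a set \<Rightarrow> ('a \<Rightarrow> 'a \<Rightarrow> bool) \<Rightarrow> 'a set \<Rightarrow> bool" where
  "maximal_bipartite V E S \<longleftrightarrow> S \<subseteq> V \<and> bipartite_set E S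
     \<and> (\<forall>T. S \<subset> T \<and> T \<subseteq> V \<longrightarrow> \<not> bipartite_set E T)"

definition well_bicovered :: "'a set \<Rightarrow> ('a \<Rightarrow> 'a \<Rightarrow> bool) \<Rightarrow> bool" where
  "well_bicovered V E \<longleftrightarrow>
     (\<forall>S T. maximal_bipartite V E S \<and> maximal_bipartite V E T \<longrightarrow> card S = card T)"

definition clique :: "'a set \<Rightarrow> ('a \<Rightarrow> 'a \<Rightarrow> bool) \<Rightarrow> 'a set \<Rightarrow> bool" where
  "clique V E C \<longleftrightarrow> C \<subseteq> V \<and> (\<forall>x\<in>C. \<forall>y\<in>C. x \<noteq> y \<longrightarrow> E x y)"

text \<open>Vertices of the glued graph: G-vertices, H-vertices, and new interior path vertices
  (Pv c i is the i-th interior vertex of the path starting at c).\<close>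
datatype ('a, 'b) pvert = Gv 'a | Hv 'b | Pv 'a nat

definition pathv :: "('a \<Rightarrow> 'b) \<Rightarrow> ('a \<Rightarrow> nat) \<Rightarrow> 'a \<Rightarrow> nat \<Rightarrow> ('a, 'b) pvert" where
  "pathv f len c i = (if i = 0 then Gv c else if i = len c then Hv (f c) else Pv c i)"

definition glue_V :: "'a set \<Rightarrow> 'b set \<Rightarrow> 'a set \<Rightarrow> ('a \<Rightarrow> nat) \<Rightarrow> ('a, 'b) pvert set" where
  "glue_V VG VH C len = Gv ` VG \<union> Hv ` VH \<union> {Pv c i | c i. c \<in> C \<and> 1 \<le> i \<and> i < len c}"

definition glue_E :: "('a \<Rightarrow> 'a \<Rightarrow> bool) \<Rightarrow> ('b \<Rightarrow> 'b \<Rightarrow> bool) \<Rightarrow> 'a set \<Rightarrow> ('a \<Rightarrow> 'b)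
    \<Rightarrow> ('a \<Rightarrow> nat) \<Rightarrow> ('a, 'b) pvert \<Rightarrow> ('a, 'b) pvert \<Rightarrow> bool" where
  "glue_E EG EH C f len x y \<longleftrightarrow>
     (\<exists>u v. x = Gv u \<and> y = Gv v \<and> EG u v)
   \<or> (\<exists>u v. x = Hv u \<and> y = Hv v \<and> EH u v)
   \<or> (\<exists>c\<in>C. \<exists>i < len c.
        (x = pathv f len c i \<and> y = pathv f len c (Suc i))
      \<or> (y = pathv f len c i \<and> x = pathv f len c (Suc i)))"

end

theory Submission
  imports Defs
begin

text \<open>A clique meets a bipartite set in at most two vertices, and these get different colours.
  Hence, given bipartite sets \<open>SG\<close> of \<open>G\<close> and \<open>SH\<close> of \<open>H\<close>, the colouring of \<open>SH\<close> can be
  complemented so that every path with both ends kept is properly 2-coloured: the constraints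
  from at most two such paths are consistent because their ends differ in colour on both sides
  and the path lengths have equal parity. So \<open>SG\<close>, \<open>SH\<close> and all interior path vertices form a
  bipartite set of \<open>F\<close>. Consequently a maximal bipartite set of \<open>F\<close> contains every interior
  vertex and restricts to maximal bipartite sets of \<open>G\<close> and \<open>H\<close>; its order is the sum of their
  orders and the number of interior vertices, which does not depend on the choice.\<close>

lemma bipartite_set_iff_coloring:
  "bipartite_set E S \<longleftrightarrow> (\<exists>col :: 'a \<Rightarrow> bool. \<forall>x\<in>S. \<forall>y\<in>S. E x y \<longrightarrow> col x \<noteq> col y)"
proof
  assume "bipartite_set E S"
  then obtain A B where AB: "A \<union> B = S" "A \<inter> B = {}" "independent E A" "independent E B"
    unfolding bipartite_set_def by blast
  show "\<exists>col :: 'a \<Rightarrow> bool. \<forall>x\<in>S. \<forall>y\<in>S. E x y \<longrightarrow> col x \<noteq> col y"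
    by (rule exI[of _ "\<lambda>x. x \<in> A"]) (use AB in \<open>auto simp: independent_def\<close>)
next
  assume "\<exists>col :: 'a \<Rightarrow> bool. \<forall>x\<in>S. \<forall>y\<in>S. E x y \<longrightarrow> col x \<noteq> col y"
  then obtain col :: "'a \<Rightarrow> bool" where "\<forall>x\<in>S. \<forall>y\<in>S. E x y \<longrightarrow> col x \<noteq> col y"
    by blast
  then show "bipartite_set E S"
    unfolding bipartite_set_def
    by (intro exI[of _ "{x\<in>S. col x}"] exI[of _ "{x\<in>S. \<not> col x}"])
       (auto simp: independent_def)
qed

lemma bipartite_set_vimage:
  assumes "bipartite_set E' T" and "\<And>u v. E u v \<Longrightarrow> E' (h u) (h v)"
  shows "bipartite_set E (h -` T)"
proof -
  obtain col :: "_ \<Rightarrow> bool" where "\<forall>x\<in>T. \<forall>y\<in>T. E' x y \<longrightarrow> col x \<noteq> col y"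
    using assms(1) bipartite_set_iff_coloring by metis
  then show ?thesis
    unfolding bipartite_set_iff_coloring using assms(2) by (intro exI[of _ "col \<circ> h"]) auto
qed

lemma maximal_bipartite_superset_eq:
  assumes "maximal_bipartite V E S" and "S \<subseteq> T" and "T \<subseteq> V" and "bipartite_set E T"
  shows "T = S"
  using assms unfolding maximal_bipartite_def by blast

lemma inj_on_bool_eq_xor_const:
  fixes a b :: "'a \<Rightarrow> bool"
  assumes "inj_on a K" and "inj_on b K"
  shows "\<exists>t. \<forall>x\<in>K. b x = (a x \<noteq> t)"
proof (cases "K = {}")
  case False
  then obtain x0 where "x0 \<in> K" by blast
  with assms have "b x = (a x \<noteq> (a x0 \<noteq> b x0))" if "x \<in> K" for x
    using that by (cases "x = x0") (auto simp: inj_on_def)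
  then show ?thesis by blast
qed simp

definition path_interior :: "'a set \<Rightarrow> ('a \<Rightarrow> nat) \<Rightarrow> ('a, 'b) pvert set" where
  "path_interior C len = (\<Union>c\<in>C. Pv c ` {1..<len c})"

lemma glue_V_eq: "glue_V VG VH C len = Gv ` VG \<union> Hv ` VH \<union> path_interior C len"
  unfolding glue_V_def path_interior_def by auto

lemma Gv_Hv_notin_path_interior [simp]:
  "Gv u \<notin> path_interior C len" "Hv v \<notin> path_interior C len"
  unfolding path_interior_def by auto

lemma finite_path_interior: "finite C \<Longrightarrow> finite (path_interior C len)"
  unfolding path_interior_def by simp

lemma card_glue_set:
  fixes A :: "'a set" and B :: "'b set"
  assumes "finite A" and "finite B" and "finite C"
  shows "card (Gv ` A \<union> Hv ` B \<union> path_interior C len)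
    = card A + card B + card (path_interior C len :: ('a, 'b) pvert set)"
proof -
  let ?P = "path_interior C len :: ('a, 'b) pvert set"
  have "card (Gv ` A \<union> Hv ` B \<union> ?P) = card (Gv ` A \<union> Hv ` B) + card ?P"
    using assms finite_path_interior[OF assms(3)]
    by (intro card_Un_disjoint) auto
  also have "card (Gv ` A \<union> Hv ` B :: ('a, 'b) pvert set)
      = card (Gv ` A :: ('a, 'b) pvert set) + card (Hv ` B :: ('a, 'b) pvert set)"
    using assms by (intro card_Un_disjoint) auto
  finally show ?thesis by (simp add: card_image inj_on_def)
qed

lemma bipartite_glue_set_of_colorings:
  fixes colG :: "'a \<Rightarrow> bool" and colH :: "'b \<Rightarrow> bool"
  assumes colG: "\<forall>x\<in>SG. \<forall>y\<in>SG. EG x y \<longrightarrow> colG x \<noteq> colG y"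
    and colH: "\<forall>x\<in>SH. \<forall>y\<in>SH. EH x y \<longrightarrow> colH x \<noteq> colH y"
    and compatible: "\<forall>c\<in>C. c \<in> SG \<longrightarrow> f c \<in> SH \<longrightarrow> colH (f c) = (colG c \<noteq> odd (len c))"
  shows "bipartite_set (glue_E EG EH C f len) (Gv ` SG \<union> Hv ` SH \<union> path_interior C len)"
    (is "bipartite_set ?E ?T")
proof -
  define g where "g c i = (if c \<in> SG then colG c \<noteq> odd i else colH (f c) \<noteq> odd (len c - i))"
    for c i
  define col where
    "col x = (case x of Gv u \<Rightarrow> colG u | Hv v \<Rightarrow> colH v | Pv c i \<Rightarrow> g c i)" for x
  have col_pathv: "col (pathv f len c i) = g c i"
    if "c \<in> C" "i \<le> len c" "pathv f len c i \<in> ?T" for c i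
  proof -
    consider "i = 0" | "i \<noteq> 0" "i = len c" | "i \<noteq> 0" "i \<noteq> len c" by blast
    then show ?thesis
    proof cases
      case 1
      with that have "c \<in> SG" by (auto simp: pathv_def)
      with 1 show ?thesis by (simp add: pathv_def col_def g_def)
    next
      case 2
      with that have "f c \<in> SH" by (auto simp: pathv_def)
      with 2 compatible \<open>c \<in> C\<close> show ?thesis by (simp add: pathv_def col_def g_def)
    next
      case 3
      then show ?thesis by (simp add: pathv_def col_def)
    qed
  qed
  have g_alternates: "g c i \<noteq> g c (Suc i)" if "i < len c" for c i
  proof -
    from that have "len c - i = Suc (len c - Suc i)" by simp
    then show ?thesis by (simp add: g_def)
  qed
  show ?thesis
    unfolding bipartite_set_iff_coloring
  proof (intro exI[of _ col] ballI impI)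
    fix x y assume x: "x \<in> ?T" and y: "y \<in> ?T" and "?E x y"
    then consider (G) u v where "x = Gv u" "y = Gv v" "EG u v"
      | (H) u v where "x = Hv u" "y = Hv v" "EH u v"
      | (path) c i where "c \<in> C" "i < len c"
          "x = pathv f len c i \<and> y = pathv f len c (Suc i)
            \<or> y = pathv f len c i \<and> x = pathv f len c (Suc i)"
      unfolding glue_E_def by blast
    then show "col x \<noteq> col y"
    proof cases
      case G
      with x y colG show ?thesis by (auto simp: col_def)
    next
      case H
      with x y colH show ?thesis by (auto simp: col_def)
    next
      case path
      have "col (pathv f len c i) \<noteq> col (pathv f len c (Suc i))"
        if "pathv f len c i \<in> ?T" and "pathv f len c (Suc i) \<in> ?T"
        using col_pathv[OF \<open>c \<in> C\<close> _ that(1)] col_pathv[OF \<open>c \<in> C\<close> _ that(2)]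
          g_alternates[of i c] \<open>i < len c\<close> by simp
      with path(3) x y show ?thesis by metis
    qed
  qed
qed

lemma bipartite_glue_set:
  assumes "clique VG EG C" and "clique VH EH D" and "inj_on f C" and "f ` C \<subseteq> D"
    and parity: "\<forall>c\<in>C. \<forall>c'\<in>C. even (len c) = even (len c')"
    and "bipartite_set EG SG" and "bipartite_set EH SH"
  shows "bipartite_set (glue_E EG EH C f len) (Gv ` SG \<union> Hv ` SH \<union> path_interior C len)"
proof -
  obtain colG :: "'a \<Rightarrow> bool" where colG: "\<forall>x\<in>SG. \<forall>y\<in>SG. EG x y \<longrightarrow> colG x \<noteq> colG y"
    using \<open>bipartite_set EG SG\<close> bipartite_set_iff_coloring by metis
  obtain colH :: "'b \<Rightarrow> bool" where colH: "\<forall>x\<in>SH. \<forall>y\<in>SH. EH x y \<longrightarrow> colH x \<noteq> colH y"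
    using \<open>bipartite_set EH SH\<close> bipartite_set_iff_coloring by metis
  let ?K = "{c\<in>C. c \<in> SG \<and> f c \<in> SH}"
  have injG: "inj_on (\<lambda>c. colG c \<noteq> odd (len c)) ?K"
  proof (rule inj_onI, rule ccontr)
    fix c c' assume "c \<in> ?K" "c' \<in> ?K" "c \<noteq> c'"
      and same: "(colG c \<noteq> odd (len c)) = (colG c' \<noteq> odd (len c'))"
    have "EG c c'" using \<open>clique VG EG C\<close> \<open>c \<in> ?K\<close> \<open>c' \<in> ?K\<close> \<open>c \<noteq> c'\<close>
      by (simp add: clique_def)
    with colG \<open>c \<in> ?K\<close> \<open>c' \<in> ?K\<close> have "colG c \<noteq> colG c'" by blast
    moreover have "odd (len c) = odd (len c')" using parity \<open>c \<in> ?K\<close> \<open>c' \<in> ?K\<close> by blast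
    ultimately show False using same by blast
  qed
  have injH: "inj_on (colH \<circ> f) ?K"
  proof (rule inj_onI, rule ccontr)
    fix c c' assume "c \<in> ?K" "c' \<in> ?K" "c \<noteq> c'" and "(colH \<circ> f) c = (colH \<circ> f) c'"
    have "f c \<in> D" "f c' \<in> D" "f c \<noteq> f c'"
      using \<open>inj_on f C\<close> \<open>f ` C \<subseteq> D\<close> \<open>c \<in> ?K\<close> \<open>c' \<in> ?K\<close> \<open>c \<noteq> c'\<close>
      by (auto simp: inj_on_def)
    then have "EH (f c) (f c')" using \<open>clique VH EH D\<close> by (simp add: clique_def)
    with colH \<open>c \<in> ?K\<close> \<open>c' \<in> ?K\<close> have "colH (f c) \<noteq> colH (f c')" by blast
    with \<open>(colH \<circ> f) c = (colH \<circ> f) c'\<close> show False by simp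
  qed
  obtain t where t: "\<forall>c\<in>?K. colH (f c) = ((colG c \<noteq> odd (len c)) \<noteq> t)"
    using inj_on_bool_eq_xor_const[OF injG injH] by auto
  show ?thesis
    by (rule bipartite_glue_set_of_colorings[where colH = "\<lambda>v. colH v \<noteq> t"])
      (use colG colH t in auto)
qed

lemma maximal_bipartite_glueD:
  assumes "clique VG EG C" and "clique VH EH D" and "inj_on f C" and "f ` C \<subseteq> D"
    and "\<forall>c\<in>C. \<forall>c'\<in>C. even (len c) = even (len c')"
    and S: "maximal_bipartite (glue_V VG VH C len) (glue_E EG EH C f len) S"
  shows "maximal_bipartite VG EG (Gv -` S)" and "maximal_bipartite VH EH (Hv -` S)"
    and "S = Gv ` (Gv -` S) \<union> Hv ` (Hv -` S) \<union> path_interior C len"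
proof -
  let ?glue = "\<lambda>A B. Gv ` A \<union> Hv ` B \<union> path_interior C len"
  let ?E = "glue_E EG EH C f len"
  have absorb: "?glue A B = S"
    if "S \<subseteq> ?glue A B" "A \<subseteq> VG" "B \<subseteq> VH" "bipartite_set EG A" "bipartite_set EH B" for A B
  proof (rule maximal_bipartite_superset_eq[OF S \<open>S \<subseteq> ?glue A B\<close>])
    show "?glue A B \<subseteq> glue_V VG VH C len" using that(2,3) by (auto simp: glue_V_eq)
    show "bipartite_set ?E (?glue A B)"
      by (rule bipartite_glue_set[OF assms(1-5) that(4,5)])
  qed
  have S_sub: "S \<subseteq> glue_V VG VH C len" and "bipartite_set ?E S"
    using S by (auto simp: maximal_bipartite_def)
  have SG: "Gv -` S \<subseteq> VG" "bipartite_set EG (Gv -` S)"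
    using S_sub \<open>bipartite_set ?E S\<close>
    by (auto simp: glue_V_eq glue_E_def intro!: bipartite_set_vimage)
  have SH: "Hv -` S \<subseteq> VH" "bipartite_set EH (Hv -` S)"
    using S_sub \<open>bipartite_set ?E S\<close>
    by (auto simp: glue_V_eq glue_E_def intro!: bipartite_set_vimage)
  have S_cover: "S \<subseteq> ?glue A B" if "Gv -` S \<subseteq> A" "Hv -` S \<subseteq> B" for A B
  proof
    fix x assume "x \<in> S"
    with S_sub that show "x \<in> ?glue A B" by (cases x) (auto simp: glue_V_eq)
  qed
  have "S \<subseteq> ?glue (Gv -` S) (Hv -` S)" by (rule S_cover) auto
  then show S_eq: "S = ?glue (Gv -` S) (Hv -` S)"
    using absorb SG SH by metis
  show "maximal_bipartite VG EG (Gv -` S)"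
    unfolding maximal_bipartite_def
  proof (intro conjI SG allI impI notI)
    fix T assume T: "Gv -` S \<subset> T \<and> T \<subseteq> VG" and "bipartite_set EG T"
    moreover have "S \<subseteq> ?glue T (Hv -` S)" using T by (intro S_cover) auto
    ultimately have "?glue T (Hv -` S) = S" using SH by (intro absorb) auto
    with T show False by auto
  qed
  show "maximal_bipartite VH EH (Hv -` S)"
    unfolding maximal_bipartite_def
  proof (intro conjI SH allI impI notI)
    fix T assume T: "Hv -` S \<subset> T \<and> T \<subseteq> VH" and "bipartite_set EH T"
    moreover have "S \<subseteq> ?glue (Gv -` S) T" using T by (intro S_cover) auto
    ultimately have "?glue (Gv -` S) T = S" using SG by (intro absorb) auto
    with T show False by auto
  qed
qed

lemma well_bicovered_glue:
  assumes "finite VG" and "well_bicovered VG EG" and "clique VG EG C"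
    and "finite VH" and "well_bicovered VH EH" and "clique VH EH D"
    and "inj_on f C" and "f ` C \<subseteq> D"
    and "\<forall>c\<in>C. \<forall>c'\<in>C. even (len c) = even (len c')"
  shows "well_bicovered (glue_V VG VH C len) (glue_E EG EH C f len)"
proof -
  let ?V = "glue_V VG VH C len" and ?E = "glue_E EG EH C f len"
  have "finite C" using assms(1,3) by (auto simp: clique_def finite_subset)
  have decomp: "maximal_bipartite VG EG (Gv -` S) \<and> maximal_bipartite VH EH (Hv -` S)
      \<and> card S = card (Gv -` S) + card (Hv -` S) + card (path_interior C len :: ('a, 'b) pvert set)"
    if "maximal_bipartite ?V ?E S" for S
  proof -
    note parts = maximal_bipartite_glueD[OF assms(3,6-9) that]
    have "finite (Gv -` S)" "finite (Hv -` S)"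
      using parts(1,2) assms(1,4) by (auto simp: maximal_bipartite_def intro: finite_subset)
    have "card S = card (Gv ` (Gv -` S) \<union> Hv ` (Hv -` S) \<union> path_interior C len)"
      using parts(3) by (rule arg_cong)
    also have "\<dots> = card (Gv -` S) + card (Hv -` S) + card (path_interior C len :: ('a, 'b) pvert set)"
      using \<open>finite (Gv -` S)\<close> \<open>finite (Hv -` S)\<close> \<open>finite C\<close> by (rule card_glue_set)
    finally show ?thesis using parts(1,2) by blast
  qed
  show ?thesis
    unfolding well_bicovered_def
  proof (intro allI impI, elim conjE)
    fix S T assume "maximal_bipartite ?V ?E S" and "maximal_bipartite ?V ?E T"
    with decomp[of S] decomp[of T] assms(2,5) show "card S = card T"
      unfolding well_bicovered_def by (metis (no_types))
  qed
qed

theorem mainTheorem11: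
  fixes VG :: "'a set" and EG :: "'a \<Rightarrow> 'a \<Rightarrow> bool"
    and VH :: "'b set" and EH :: "'b \<Rightarrow> 'b \<Rightarrow> bool"
    and C :: "'a set" and D :: "'b set" and k :: nat
    and f :: "'a \<Rightarrow> 'b" and len :: "'a \<Rightarrow> nat"
  assumes "graph VG EG" and "well_bicovered VG EG" and "clique VG EG C"
    and "graph VH EH" and "well_bicovered VH EH" and "clique VH EH D"
    and "card C = k" and "card D = k"
    and "bij_betw f C D"
    and "\<forall>c\<in>C. len c \<ge> 1"
    and "\<forall>c\<in>C. \<forall>c'\<in>C. even (len c) = even (len c')"
  shows "well_bicovered (glue_V VG VH C len) (glue_E EG EH C f len)"
proof (rule well_bicovered_glue)
  show "finite VG" "finite VH" using assms(1,4) by (auto simp: graph_def)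
  show "inj_on f C" "f ` C \<subseteq> D" using assms(9) by (auto simp: bij_betw_def)
qed (fact assms)+

end
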